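(* Let $S\subseteq\{(i,j)\in[n]\times[n]:i<j\}$ be such that $U_S:=\{I_n+\sum_{(i,j)\in S}a_{ij}E_{ij}: a_{ij}\in\mathbb F\}$ is a subgroup of $U_n$. Then $U_S$ is generated by $\{I_n+\lambda E_{ij}:(i,j)\in S,\ \lambda\in\mathbb F\}$, and every element of $U_S$ is a product of at most $|S|$ elements of this set.
   Context: $\mathbb F$ is a field; $[n]=\{1,\dots,n\}$; $U_n$ is the group of $n\times n$ upper triangular matrices over $\mathbb F$ with all diagonal entries $1$; $E_{ij}$ is the matrix unit. *)

theory Defs
  imports "HOL-Analysis.Analysis"
begin

text \<open>Square matrices over a field 'a indexed by a finite linearly ordered type 'n
  (standing for [n] with its usual order).\<close>

definition Eij :: "'n::finite \<Rightarrow> 'n \<Rightarrow> 'a::field^'n^'n" where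
  "Eij i j = (\<chi> k l. if k = i \<and> l = j then 1 else 0)"

definition scaleM :: "'a::field \<Rightarrow> 'a^'n^'m \<Rightarrow> 'a^'n^'m" where
  "scaleM c A = (\<chi> k l. c * A $ k $ l)"

definition UT :: "('a::field^('n::{finite,linorder})^('n::{finite,linorder})) set" where
  "UT = {A. (\<forall>i. A $ i $ i = 1) \<and> (\<forall>i j. j < i \<longrightarrow> A $ i $ j = 0)}"

definition US :: "('n::{finite,linorder} \<times> 'n::{finite,linorder}) set \<Rightarrow> ('a::field^('n::{finite,linorder})^('n::{finite,linorder})) set" where
  "US S = {mat 1 + (\<Sum>(i,j)\<in>S. scaleM (a i j) (Eij i j)) | a. True}"

definition is_subgroup :: "('a::field^'n::finite^'n) set \<Rightarrow> ('a^'n^'n) set \<Rightarrow> bool" where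
  "is_subgroup H G \<longleftrightarrow> H \<subseteq> G \<and> mat 1 \<in> H \<and>
     (\<forall>x\<in>H. \<forall>y\<in>H. x ** y \<in> H) \<and> (\<forall>x\<in>H. invertible x \<and> matrix_inv x \<in> H)"

inductive_set gen_group :: "('a::field^'n::finite^'n) set \<Rightarrow> ('a^'n^'n) set" for X where
  gen_one: "mat 1 \<in> gen_group X"
| gen_incl: "x \<in> X \<Longrightarrow> x \<in> gen_group X"
| gen_mult: "x \<in> gen_group X \<Longrightarrow> y \<in> gen_group X \<Longrightarrow> x ** y \<in> gen_group X"
| gen_inv: "x \<in> gen_group X \<Longrightarrow> matrix_inv x \<in> gen_group X"

definition gens :: "('n::finite \<times> 'n) set \<Rightarrow> ('a::field^'n^'n) set" where
  "gens S = {mat 1 + scaleM c (Eij i j) | i j c. (i,j) \<in> S}"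

definition mprod :: "('a::field^'n::finite^'n) list \<Rightarrow> 'a^'n^'n" where
  "mprod xs = foldr (**) xs (mat 1)"

end

theory Submission
  imports Defs
begin

text \<open>Every A \<in> U_S is reduced to I by right multiplications with elementary matrices
  I - \<lambda>E_ij, (i,j) \<in> S, each clearing one more position of S. Right multiplication by
  I - \<lambda>E_ij subtracts \<lambda> times column i from column j, so \<lambda> = A_ij clears position (i,j),
  and it can only disturb a cleared position (k,j) through an entry A_ki \<noteq> 0 with k < i.
  Clearing the positions in order of decreasing row keeps the uncleared ones closed upwards
  in every column, so such a (k,j) is in fact still uncleared. Positions outside S stay zero
  because U_S is closed under multiplication.\<close>

lemma sum_scaleM_Eij_entry:
  "(\<Sum>(i,j)\<in>S. scaleM (a i j) (Eij i j :: 'a::field^'n::finite^'n)) $ k $ l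
     = (if (k,l) \<in> S then a k l else 0)"
proof -
  have "(\<Sum>(i,j)\<in>S. scaleM (a i j) (Eij i j :: 'a^'n^'n)) $ k $ l
      = (\<Sum>p\<in>S. if p = (k,l) then a k l else 0)"
    unfolding sum_component
    by (rule sum.cong) (auto simp: scaleM_def Eij_def split: if_split_asm)
  then show ?thesis
    by (simp add: sum.delta')
qed

lemma mem_US_iff:
  fixes A :: "'a::field^('n::{finite,linorder})^('n::{finite,linorder})"
  assumes irrefl: "\<And>i. (i, i) \<notin> S"
  shows "A \<in> US S \<longleftrightarrow> (\<forall>k. A$k$k = 1) \<and> (\<forall>k l. k \<noteq> l \<and> (k,l) \<notin> S \<longrightarrow> A$k$l = 0)"
proof
  assume "A \<in> US S"
  then obtain a where "A = mat 1 + (\<Sum>(i,j)\<in>S. scaleM (a i j) (Eij i j))"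
    unfolding US_def by blast
  then have "A$k$l = (if k = l then 1 else 0) + (if (k,l) \<in> S then a k l else 0)" for k l
    by (simp only: vector_add_component sum_scaleM_Eij_entry) (simp add: mat_def)
  then show "(\<forall>k. A$k$k = 1) \<and> (\<forall>k l. k \<noteq> l \<and> (k,l) \<notin> S \<longrightarrow> A$k$l = 0)"
    using irrefl by auto
next
  assume "(\<forall>k. A$k$k = 1) \<and> (\<forall>k l. k \<noteq> l \<and> (k,l) \<notin> S \<longrightarrow> A$k$l = 0)"
  then have "A = mat 1 + (\<Sum>(i,j)\<in>S. scaleM (A$i$j) (Eij i j))"
    using irrefl
    by (simp only: vec_eq_iff vector_add_component sum_scaleM_Eij_entry) (auto simp: mat_def)
  then show "A \<in> US S"
    unfolding US_def by (intro CollectI exI[of _ "\<lambda>i j. A$i$j"]) simp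
qed

lemma US_mono:
  assumes "T \<subseteq> S" "\<And>i. (i, i) \<notin> S"
  shows "US T \<subseteq> (US S :: ('a::field^('n::{finite,linorder})^('n::{finite,linorder})) set)"
proof -
  have "\<And>i. (i, i) \<notin> T"
    using assms by blast
  then show ?thesis
    using assms by (fastforce simp: mem_US_iff)
qed

lemma gens_subset_US:
  assumes irrefl: "\<And>i. (i, i) \<notin> S"
  shows "gens S \<subseteq> (US S :: ('a::field^('n::{finite,linorder})^('n::{finite,linorder})) set)"
  using irrefl by (auto simp: gens_def mem_US_iff mat_def scaleM_def Eij_def)

lemma matrix_mul_elementary_entry:
  "((A::'a::field^'n::finite^'n) ** (mat 1 + scaleM c (Eij i j))) $ k $ l
     = A$k$l + (if l = j then c * A$k$i else 0)"
proof -
  have "(A ** scaleM c (Eij i j)) $ k $ l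
      = (\<Sum>m\<in>UNIV. A$k$m * (c * (if m = i \<and> l = j then 1 else 0)))"
    by (simp add: matrix_matrix_mult_def scaleM_def Eij_def)
  also have "\<dots> = (if l = j then c * A$k$i else 0)"
    by (cases "l = j") (simp_all add: if_distrib sum.delta' mult.commute cong: if_cong)
  finally show ?thesis
    by (simp add: matrix_add_ldistrib)
qed

lemma elementary_mul_elementary_neg:
  assumes "i \<noteq> j"
  shows "(mat 1 + scaleM (- c) (Eij i j)) ** (mat 1 + scaleM c (Eij i j))
    = (mat 1 :: 'a::field^'n::finite^'n)"
  using assms
  by (simp add: vec_eq_iff matrix_mul_elementary_entry) (auto simp: mat_def scaleM_def Eij_def)

lemma mprod_append_singleton: "mprod (xs @ [g]) = mprod xs ** (g::'a::field^'n::finite^'n)"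
proof -
  have "mprod (xs @ [g]) = foldr (**) xs g"
    by (simp add: mprod_def)
  also have "foldr (**) xs M = mprod xs ** M" for M :: "'a^'n^'n"
    by (induction xs) (simp_all add: mprod_def matrix_mul_assoc)
  finally show ?thesis .
qed

lemma mprod_in_gen_group:
  "set xs \<subseteq> X \<Longrightarrow> mprod xs \<in> gen_group (X::('a::field^'n::finite^'n) set)"
  by (induction xs) (simp_all add: mprod_def gen_group.intros)

lemma gen_group_subset:
  assumes "is_subgroup H G" "X \<subseteq> H"
  shows "gen_group X \<subseteq> H"
proof
  fix x
  assume "x \<in> gen_group X"
  then show "x \<in> H"
    by induction (use assms in \<open>auto simp: is_subgroup_def\<close>)
qed

definition column_upward_closed :: "('n::linorder \<times> 'n) set \<Rightarrow> ('n \<times> 'n) set \<Rightarrow> bool" where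
  "column_upward_closed S T \<longleftrightarrow> (\<forall>i j k. (i,j) \<in> T \<longrightarrow> (k,j) \<in> S \<longrightarrow> k < i \<longrightarrow> (k,j) \<in> T)"

lemma column_upward_closed_remove_max_row:
  assumes closed: "column_upward_closed S T" and "finite T" "T \<noteq> {}"
  obtains i j where "(i,j) \<in> T" "column_upward_closed S (T - {(i,j)})"
proof -
  define i where "i = Max (fst ` T)"
  have "i \<in> fst ` T"
    unfolding i_def using assms(2,3) by (intro Max_in) auto
  then obtain j where "(i,j) \<in> T"
    by force
  moreover have "p \<le> i" if "(p,q) \<in> T" for p q
    using that assms(2) unfolding i_def by (force intro: Max_ge)
  then have "column_upward_closed S (T - {(i,j)})"
    using closed unfolding column_upward_closed_def by fastforce
  ultimately show thesis
    by (rule that)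
qed

lemma clear_entry_vanishes:
  fixes A :: "'a::field^('n::{finite,linorder})^('n::{finite,linorder})"
  assumes upper: "S \<subseteq> {(i,j). i < j}" and "T \<subseteq> S"
    and closed: "column_upward_closed S T" and "(i,j) \<in> T"
    and A: "A \<in> US T" and kl: "(k,l) \<in> S - (T - {(i,j)})"
  shows "(A ** (mat 1 + scaleM (- A$i$j) (Eij i j))) $ k $ l = 0"
proof -
  have "\<And>p. (p, p) \<notin> T"
    using upper \<open>T \<subseteq> S\<close> by blast
  then have A_entries: "\<forall>k. A$k$k = 1" "\<forall>k l. k \<noteq> l \<and> (k,l) \<notin> T \<longrightarrow> A$k$l = 0"
    using A by (auto simp: mem_US_iff)
  show ?thesis
  proof (cases "(k,l) = (i,j)")
    case True
    then show ?thesis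
      using A_entries by (simp add: matrix_mul_elementary_entry)
  next
    case False
    with kl have "(k,l) \<in> S - T"
      by blast
    have "A$k$i = 0" if "l = j"
    proof -
      have "(k,i) \<notin> T"
        using closed upper \<open>T \<subseteq> S\<close> \<open>(i,j) \<in> T\<close> \<open>(k,l) \<in> S - T\<close> \<open>l = j\<close>
        unfolding column_upward_closed_def by blast
      moreover have "k \<noteq> i"
        using \<open>(i,j) \<in> T\<close> \<open>(k,l) \<in> S - T\<close> \<open>l = j\<close> by blast
      ultimately show ?thesis
        using A_entries by blast
    qed
    moreover have "k \<noteq> l"
      using \<open>(k,l) \<in> S - T\<close> upper by blast
    ultimately show ?thesis
      using \<open>(k,l) \<in> S - T\<close> A_entries by (auto simp: matrix_mul_elementary_entry)
  qed
qed

lemma clear_entry_mem_US: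
  fixes A :: "'a::field^('n::{finite,linorder})^('n::{finite,linorder})"
  assumes upper: "S \<subseteq> {(i,j). i < j}" and "T \<subseteq> S"
    and closed: "column_upward_closed S T" and "(i,j) \<in> T"
    and A: "A \<in> US T"
    and B: "A ** (mat 1 + scaleM (- A$i$j) (Eij i j)) \<in> US S"
  shows "A ** (mat 1 + scaleM (- A$i$j) (Eij i j)) \<in> US (T - {(i,j)})"
proof -
  have irrefl: "\<And>p. (p, p) \<notin> S"
    using upper by blast
  then have irrefl': "\<And>p. (p, p) \<notin> T - {(i,j)}"
    using \<open>T \<subseteq> S\<close> by blast
  show ?thesis
    unfolding mem_US_iff[OF irrefl']
  proof (intro conjI allI impI)
    show "(A ** (mat 1 + scaleM (- A$i$j) (Eij i j))) $ k $ k = 1" for k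
      using B by (simp add: mem_US_iff[OF irrefl])
    show "(A ** (mat 1 + scaleM (- A$i$j) (Eij i j))) $ k $ l = 0"
      if "k \<noteq> l \<and> (k,l) \<notin> T - {(i,j)}" for k l
      using that B clear_entry_vanishes[OF upper \<open>T \<subseteq> S\<close> closed \<open>(i,j) \<in> T\<close> A]
      by (cases "(k,l) \<in> S") (auto simp: mem_US_iff[OF irrefl])
  qed
qed

lemma ex_mprod_gens_of_mem_US:
  fixes A :: "'a::field^('n::{finite,linorder})^('n::{finite,linorder})"
  assumes upper: "S \<subseteq> {(i,j). i < j}"
    and mul_closed: "\<And>B g. B \<in> US S \<Longrightarrow> g \<in> gens S \<Longrightarrow>
      (B ** g :: 'a^('n::{finite,linorder})^('n::{finite,linorder})) \<in> US S"
    and "T \<subseteq> S" "column_upward_closed S T" "A \<in> US T"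
  shows "\<exists>xs. set xs \<subseteq> gens S \<and> length xs \<le> card T \<and> A = mprod xs"
  using assms(3-)
proof (induction "card T" arbitrary: T A)
  case 0
  then have "A = mat 1"
    by (simp add: US_def)
  then show ?case
    by (intro exI[of _ "[]"]) (simp add: mprod_def)
next
  case (Suc m)
  have "T \<noteq> {}"
    using Suc.hyps(2) by auto
  then obtain i j where ij: "(i,j) \<in> T" and closed': "column_upward_closed S (T - {(i,j)})"
    using Suc.prems(2) by (metis finite column_upward_closed_remove_max_row)
  have irrefl: "\<And>i. (i, i) \<notin> S"
    using upper by auto
  have "(i,j) \<in> S" "i < j"
    using ij \<open>T \<subseteq> S\<close> upper by auto
  define g :: "'a^('n::{finite,linorder})^('n::{finite,linorder})"
    where "g = mat 1 + scaleM (A$i$j) (Eij i j)"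
  define B where "B = A ** (mat 1 + scaleM (- A$i$j) (Eij i j))"
  have "A \<in> US S"
    using US_mono[OF \<open>T \<subseteq> S\<close> irrefl] Suc.prems(3) by blast
  moreover have "mat 1 + scaleM (- A$i$j) (Eij i j) \<in> gens S"
    using \<open>(i,j) \<in> S\<close> by (auto simp: gens_def)
  ultimately have "B \<in> US S"
    unfolding B_def by (rule mul_closed)
  then have "B \<in> US (T - {(i,j)})"
    unfolding B_def by (rule clear_entry_mem_US[OF upper Suc.prems(1,2) ij Suc.prems(3)])
  moreover have "m = card (T - {(i,j)})"
    using Suc.hyps(2) ij by simp
  moreover have "T - {(i,j)} \<subseteq> S"
    using Suc.prems(1) by blast
  ultimately obtain xs where xs: "set xs \<subseteq> gens S" "length xs \<le> m" "B = mprod xs"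
    using Suc.hyps(1) closed' by metis
  have "A = B ** g"
    by (simp add: B_def g_def elementary_mul_elementary_neg[OF less_imp_neq[OF \<open>i < j\<close>]]
        flip: matrix_mul_assoc)
  moreover have "g \<in> gens S"
    using \<open>(i,j) \<in> S\<close> by (auto simp: g_def gens_def)
  ultimately show ?case
    using xs Suc.hyps(2) by (intro exI[of _ "xs @ [g]"]) (simp add: mprod_append_singleton)
qed

theorem lemma2p13:
  fixes S :: "('n::{finite,linorder} \<times> 'n::{finite,linorder}) set"
  assumes "S \<subseteq> {(i,j). i < j}"
    and "is_subgroup (US S :: ('a::field^('n::{finite,linorder})^('n::{finite,linorder})) set) UT"
  shows "US S = gen_group (gens S :: ('a::field^('n::{finite,linorder})^('n::{finite,linorder})) set)
    \<and> (\<forall>A \<in> (US S :: ('a::field^('n::{finite,linorder})^('n::{finite,linorder})) set).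
         \<exists>xs. set xs \<subseteq> gens S \<and> length xs \<le> card S \<and> A = mprod xs)"
proof -
  have gens_US: "gens S \<subseteq> (US S :: ('a^('n::{finite,linorder})^('n::{finite,linorder})) set)"
    using assms(1) by (intro gens_subset_US) auto
  have products: "\<exists>xs. set xs \<subseteq> gens S \<and> length xs \<le> card S \<and> A = mprod xs"
    if "A \<in> (US S :: ('a^('n::{finite,linorder})^('n::{finite,linorder})) set)" for A
  proof (rule ex_mprod_gens_of_mem_US[OF assms(1) _ subset_refl _ that])
    show "B ** g \<in> US S" if "B \<in> US S" "g \<in> gens S"
      for B g :: "'a^('n::{finite,linorder})^('n::{finite,linorder})"
      using assms(2) gens_US that unfolding is_subgroup_def by blast
  qed (simp add: column_upward_closed_def)
  have "US S \<subseteq> (gen_group (gens S) :: ('a^('n::{finite,linorder})^('n::{finite,linorder})) set)"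
  proof
    fix A
    assume "A \<in> (US S :: ('a^('n::{finite,linorder})^('n::{finite,linorder})) set)"
    then obtain xs where "set xs \<subseteq> gens S" "A = mprod xs"
      using products by blast
    then show "A \<in> gen_group (gens S)"
      by (simp add: mprod_in_gen_group)
  qed
  moreover have "gen_group (gens S) \<subseteq> (US S :: ('a^('n::{finite,linorder})^('n::{finite,linorder})) set)"
    using assms(2) gens_US by (rule gen_group_subset)
  ultimately show ?thesis
    using products by (simp add: subset_antisym)
qed

end
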